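(* Let $\lambda\ge0$, $n\ge0$ an integer and $x\in[-1,1]$. Then $$I^\lambda_+C^{\lambda+1/2}_n(x)=c_{n,\lambda}\frac{\lambda+\frac12}{\lambda+n+\frac12}(1+x)\,{}_2F_1\!\Big(-n,\,n+2\lambda+1;\,\lambda+\tfrac12;\,\tfrac{1-x}2\Big),$$ $$I^\lambda_-C^{\lambda+1/2}_n(x)=c_{n,\lambda}(1-x)\,{}_2F_1\!\Big(-n,\,n+2\lambda+1;\,\lambda+\tfrac32;\,\tfrac{1-x}2\Big),$$ where $c_{n,\lambda}=\frac{\sqrt\pi(2\lambda+1)_n}{n!}\frac{\Gamma(\lambda+1)}{\Gamma(\lambda+\frac32)}$.
   Context: $C^\mu_n$ are Gegenbauer polynomials with generating function $(1-2xr+r^2)^{-\mu}$; ${}_2F_1$ is the Gauss hypergeometric function (terminating here) and $(a)_k$ the Pochhammer symbol. For $f\in L^1[-1,1]$ and $\lambda\ge0$: $I^\lambda_+f(x)=(1+x)^{-\lambda+1/2}\int_{-1}^x(x-\tau)^{-1/2}(1+\tau)^\lambda f(\tau)\,d\tau$, $I^\lambda_-f(x)=(1-x)^{-\lambda+1/2}\int_x^1(\tau-x)^{-1/2}(1-\tau)^\lambda f(\tau)\,d\tau$. *)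

theory Defs
  imports "HOL-Analysis.Analysis" "HOL-Computational_Algebra.Formal_Power_Series"
begin

text \<open>Gegenbauer polynomial C^mu_n(x): the n-th coefficient of the power series in r of
  (1 - 2 x r + r^2)^(-mu) = (1 + u)^(-mu) composed with u = -2 x r + r^2.\<close>
definition gegenbauer :: "real \<Rightarrow> nat \<Rightarrow> real \<Rightarrow> real" where
  "gegenbauer mu n x =
     fps_nth (fps_compose (fps_binomial (- mu)) (fps_const (-2 * x) * fps_X + fps_X ^ 2)) n"

definition hyp2F1_term :: "nat \<Rightarrow> real \<Rightarrow> real \<Rightarrow> real \<Rightarrow> real" where
  "hyp2F1_term n b c z =
     (\<Sum>k\<le>n. pochhammer (- real n) k * pochhammer b k / (pochhammer c k * fact k) * z ^ k)"

definition I_plus :: "real \<Rightarrow> (real \<Rightarrow> real) \<Rightarrow> real \<Rightarrow> real" where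
  "I_plus lam f x = (1 + x) powr (- lam + 1/2) *
     integral {-1..x} (\<lambda>t. (x - t) powr (-1/2) * (1 + t) powr lam * f t)"

definition I_minus :: "real \<Rightarrow> (real \<Rightarrow> real) \<Rightarrow> real \<Rightarrow> real" where
  "I_minus lam f x = (1 - x) powr (- lam + 1/2) *
     integral {x..1} (\<lambda>t. (t - x) powr (-1/2) * (1 - t) powr lam * f t)"

definition c_const :: "nat \<Rightarrow> real \<Rightarrow> real" where
  "c_const n lam = sqrt pi * pochhammer (2 * lam + 1) n / fact n * (Gamma (lam + 1) / Gamma (lam + 3/2))"

end

theory Submission
  imports Defs
begin

text \<open>
  The generating function (1 - 2 x r + r^2)^(-mu) satisfies a first order differential equation in r,
  which yields the three-term recurrence of the Gegenbauer polynomials. The terminating series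
  (2 mu)_n / n! * 2F1(-n, n + 2 mu; mu + 1/2; (1 - x)/2) satisfies the same recurrence coefficientwise,
  so it equals C^mu_n(x). For mu = lam + 1/2 the operator I^lam_- sends each power (1 - t)^k to a Beta
  integral, (1 - x)^(k+1) B(1/2, lam + k + 1); the ratio of Beta values turns the lower parameter
  lam + 1 into lam + 3/2 and leaves the constant c_{n,lam}. The substitution t -> -t together with
  the parity of C^mu_n reduces I^lam_+ at x to I^lam_- at -x, and the reflection
  2F1(-n, b; c; 1 - z) = (c - b)_n / (c)_n * 2F1(-n, b; b - c - n + 1; z), a consequence of
  Chu-Vandermonde, brings the result into the stated form.
\<close>

lemma gegenbauer_generating_ode:
  fixes mu x :: real
  defines "G \<equiv> fps_const (-2 * x) * fps_X + fps_X ^ 2"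
  defines "F \<equiv> fps_compose (fps_binomial (- mu)) G"
  shows "(1 + G) * fps_deriv F = fps_const (- mu) * F * fps_deriv G"
proof -
  define B where "B = fps_binomial (- mu)"
  have G0: "fps_nth G 0 = 0" by (simp add: G_def)
  have "(1 + fps_X) * fps_deriv B = fps_const (- mu) * B"
    unfolding B_def fps_binomial_deriv by simp
  then have "((1 + fps_X) * fps_deriv B) oo G = (fps_const (- mu) * B) oo G"
    by simp
  then have "(1 + G) * (fps_deriv B oo G) = fps_const (- mu) * (B oo G)"
    by (simp add: fps_compose_mult_distrib[OF G0] fps_compose_add_distrib G0)
  then show ?thesis
    unfolding F_def B_def[symmetric] fps_compose_deriv[OF G0] by (metis mult.assoc)
qed

lemma
  fixes mu x :: real
  shows gegenbauer_0: "gegenbauer mu 0 x = 1"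
    and gegenbauer_1: "gegenbauer mu 1 x = 2 * mu * x"
    and gegenbauer_Suc_Suc: "(real n + 2) * gegenbauer mu (n + 2) x
          = 2 * x * (real n + 1 + mu) * gegenbauer mu (n + 1) x - (real n + 2 * mu) * gegenbauer mu n x"
proof -
  define G where "G = fps_const (-2 * x) * fps_X + (fps_X ^ 2 :: real fps)"
  define F where "F = fps_compose (fps_binomial (- mu)) G"
  have C: "gegenbauer mu m x = fps_nth F m" for m by (simp add: gegenbauer_def F_def G_def)
  have dG: "fps_deriv G = fps_const (-2 * x) + fps_const 2 * fps_X"
    by (simp add: G_def fps_deriv_power numeral_2_eq_2 fps_const_add [symmetric])
  have ode: "fps_deriv F + fps_const (-2 * x) * (fps_X * fps_deriv F) + fps_X ^ 2 * fps_deriv F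
      = fps_const (2 * mu * x) * F + fps_const (-2 * mu) * (fps_X * F)"
  proof -
    have "fps_const (- mu) * fps_const (-2 * x) = fps_const (2 * mu * x)"
      "fps_const (- mu) * fps_const 2 = (fps_const (-2 * mu) :: real fps)"
      by (simp_all add: fps_const_mult[symmetric] del: fps_const_mult)
    with gegenbauer_generating_ode[of x mu] show ?thesis
      unfolding G_def[symmetric] F_def[symmetric] dG by (simp add: algebra_simps G_def)
  qed
  show "gegenbauer mu 0 x = 1" by (simp add: C F_def)
  from arg_cong[OF ode, of "\<lambda>f. fps_nth f 0"]
  show "gegenbauer mu 1 x = 2 * mu * x"
    by (simp add: C fps_X_power_mult_nth F_def)
  from arg_cong[OF ode, of "\<lambda>f. fps_nth f (Suc n)"]
  have "(real n + 2) * fps_nth F (n+2) - 2 * x * ((real n + 1) * fps_nth F (n+1)) + real n * fps_nth F n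
      = 2 * mu * x * fps_nth F (n+1) - 2 * mu * fps_nth F n"
    by (cases n) (simp_all add: fps_X_power_mult_nth)
  then show "(real n + 2) * gegenbauer mu (n + 2) x
          = 2 * x * (real n + 1 + mu) * gegenbauer mu (n + 1) x - (real n + 2 * mu) * gegenbauer mu n x"
    unfolding C by (simp add: algebra_simps)
qed

text \<open>The coefficient of z^k in (2 mu)_n / n! * 2F1(-n, n + 2 mu; mu + 1/2; z), with
  (2 mu)_n (n + 2 mu)_k merged into (2 mu)_(n+k) so that its recurrence in n needs no case split.\<close>

definition gegenbauer_coeff :: "real \<Rightarrow> nat \<Rightarrow> nat \<Rightarrow> real" where
  "gegenbauer_coeff mu n k =
     pochhammer (2 * mu) (n + k) * pochhammer (- real n) k / (fact n * fact k * pochhammer (mu + 1/2) k)"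

lemma gegenbauer_coeff_eq_0: "n < k \<Longrightarrow> gegenbauer_coeff mu n k = 0"
  by (simp add: gegenbauer_coeff_def pochhammer_of_nat_eq_0_lemma)

lemma gegenbauer_coeff_0_Suc_Suc:
  "(real n + 2) * gegenbauer_coeff mu (n + 2) 0
     = 2 * (real n + 1 + mu) * gegenbauer_coeff mu (n + 1) 0 - (real n + 2 * mu) * gegenbauer_coeff mu n 0"
proof -
  define P where "P = pochhammer (2 * mu) n"
  define F where "F = (fact n :: real)"
  have "F > 0" unfolding F_def by simp
  have coeff: "gegenbauer_coeff mu m 0 = pochhammer (2 * mu) m / fact m" for m
    by (simp add: gegenbauer_coeff_def)
  have P: "pochhammer (2 * mu) (n + 2) = P * (2 * mu + real n) * (2 * mu + real n + 1)"
          "pochhammer (2 * mu) (n + 1) = P * (2 * mu + real n)"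
    unfolding P_def by (simp_all add: pochhammer_rec' algebra_simps)
  have F: "(fact (n + 2) :: real) = F * (real n + 1) * (real n + 2)"
          "(fact (n + 1) :: real) = F * (real n + 1)"
    unfolding F_def by (simp_all add: algebra_simps)
  have "real n + 1 > 0" "real n + 2 > 0" by simp_all
  then show ?thesis
    unfolding coeff P F P_def[symmetric] F_def[symmetric] using \<open>F > 0\<close>
    by (simp add: divide_simps) (simp add: algebra_simps)
qed

lemma pochhammer_minus_Suc_div_fact:
  "pochhammer (- real (Suc m)) (Suc k) / fact (Suc m) = - (pochhammer (- real m) k / fact m :: real)"
proof -
  have "- real (Suc m) + 1 = - real m" by simp
  then have "pochhammer (- real (Suc m)) (Suc k) = - real (Suc m) * pochhammer (- real m) k"
    unfolding pochhammer_rec by simp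
  then show ?thesis by (simp del: of_nat_Suc)
qed

lemma gegenbauer_coeff_Suc_Suc:
  fixes mu :: real
  assumes mu: "mu > -1/2"
  shows "(real n + 2) * gegenbauer_coeff mu (n + 2) (Suc k)
     = 2 * (real n + 1 + mu) * gegenbauer_coeff mu (n + 1) (Suc k)
       - 4 * (real n + 1 + mu) * gegenbauer_coeff mu (n + 1) k
       - (real n + 2 * mu) * gegenbauer_coeff mu n (Suc k)"
proof -
  define a where "a = 2 * mu + real n + real k + 1"
  define b where "b = mu + 1/2 + real k"
  define P where "P = pochhammer (2 * mu) (n + k + 1)"
  define R where "R = pochhammer (- real (n + 1)) k / fact (n + 1)"
  define A where "A = pochhammer (mu + 1/2) k"
  have "A > 0" "b > 0" unfolding A_def b_def using mu by (simp_all add: pochhammer_pos)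
  have P: "pochhammer (2 * mu) (n + 2 + Suc k) = P * a * (a + 1)"
          "pochhammer (2 * mu) (n + 1 + Suc k) = P * a"
          "pochhammer (2 * mu) (n + 1 + k) = P"
          "pochhammer (2 * mu) (n + Suc k) = P"
    unfolding P_def a_def by (simp_all add: pochhammer_rec' algebra_simps)
  have R: "pochhammer (- real (n + 2)) (Suc k) / fact (n + 2) = - R"
          "pochhammer (- real (n + 1)) (Suc k) / fact (n + 1) = R * (real k - real n - 1)"
          "pochhammer (- real n) (Suc k) / fact n = - R * (real k - real n - 1) * (real k - real n)"
  proof -
    show "pochhammer (- real (n + 2)) (Suc k) / fact (n + 2) = - R"
      using pochhammer_minus_Suc_div_fact[of "n + 1" k] by (simp add: R_def)
    show "pochhammer (- real (n + 1)) (Suc k) / fact (n + 1) = R * (real k - real n - 1)"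
      by (simp add: R_def pochhammer_rec' algebra_simps)
    have "pochhammer (- real (n + 1)) (Suc (Suc k))
        = pochhammer (- real (n + 1)) k * (real k - real n - 1) * (real k - real n)"
      by (simp add: pochhammer_rec' algebra_simps)
    then show "pochhammer (- real n) (Suc k) / fact n = - R * (real k - real n - 1) * (real k - real n)"
      using pochhammer_minus_Suc_div_fact[of n "Suc k"] by (simp add: R_def)
  qed
  have A: "pochhammer (mu + 1/2) (Suc k) = A * b"
    unfolding A_def b_def by (simp add: pochhammer_rec')
  define D where "D = P * R / (fact (Suc k) * A * b)"
  have coeff: "gegenbauer_coeff mu m j = pochhammer (2 * mu) (m + j) * (pochhammer (- real m) j / fact m)
      / (fact j * pochhammer (mu + 1/2) j)" for m j
    by (simp add: gegenbauer_coeff_def)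
  have c: "gegenbauer_coeff mu (n + 2) (Suc k) = D * (- a * (a + 1))"
       "gegenbauer_coeff mu (n + 1) (Suc k) = D * (a * (real k - real n - 1))"
       "gegenbauer_coeff mu (n + 1) k = D * ((real k + 1) * b)"
       "gegenbauer_coeff mu n (Suc k) = D * (- (real k - real n - 1) * (real k - real n))"
    unfolding coeff P R A A_def[symmetric] R_def[symmetric] D_def using \<open>A > 0\<close> \<open>b > 0\<close>
    by (simp_all add: divide_simps) (simp add: algebra_simps)
  have "(real n + 2) * (- a * (a + 1)) = 2 * (real n + 1 + mu) * (a * (real k - real n - 1))
      - 4 * (real n + 1 + mu) * ((real k + 1) * b) - (real n + 2 * mu) * (- (real k - real n - 1) * (real k - real n))"
    unfolding a_def b_def by (simp add: field_simps)
  then have "D * ((real n + 2) * (- a * (a + 1))) = D * (2 * (real n + 1 + mu) * (a * (real k - real n - 1))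
      - 4 * (real n + 1 + mu) * ((real k + 1) * b) - (real n + 2 * mu) * (- (real k - real n - 1) * (real k - real n)))"
    by simp
  then show ?thesis
    unfolding c by (simp add: algebra_simps)
qed

definition gegenbauer_hyp :: "real \<Rightarrow> nat \<Rightarrow> real \<Rightarrow> real" where
  "gegenbauer_hyp mu n z = (\<Sum>k\<le>n. gegenbauer_coeff mu n k * z ^ k)"

lemma gegenbauer_hyp_eq_hyp2F1:
  "gegenbauer_hyp mu n z = pochhammer (2 * mu) n / fact n * hyp2F1_term n (real n + 2 * mu) (mu + 1/2) z"
proof -
  have "pochhammer (2 * mu) (n + k) = pochhammer (2 * mu) n * pochhammer (real n + 2 * mu) k" for k
    using pochhammer_product'[of "2 * mu" n k] by (simp add: add.commute)
  then show ?thesis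
    unfolding gegenbauer_hyp_def hyp2F1_term_def sum_distrib_left gegenbauer_coeff_def
    by (intro sum.cong refl) (simp add: algebra_simps)
qed

lemma gegenbauer_hyp_eq_sum_atMost:
  "n \<le> N \<Longrightarrow> gegenbauer_hyp mu n z = (\<Sum>k\<le>N. gegenbauer_coeff mu n k * z ^ k)"
  unfolding gegenbauer_hyp_def by (rule sum.mono_neutral_left) (auto simp: gegenbauer_coeff_eq_0)

lemma gegenbauer_hyp_Suc_Suc:
  fixes mu :: real
  assumes mu: "mu > -1/2"
  shows "(real n + 2) * gegenbauer_hyp mu (n + 2) z
     = 2 * (1 - 2 * z) * (real n + 1 + mu) * gegenbauer_hyp mu (n + 1) z - (real n + 2 * mu) * gegenbauer_hyp mu n z"
proof -
  define c where "c = real n + 1 + mu"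
  define d where "d = real n + 2 * mu"
  define g where "g k = (2 * c * gegenbauer_coeff mu (n + 1) k - d * gegenbauer_coeff mu n k
      - (real n + 2) * gegenbauer_coeff mu (n + 2) k) * z ^ k" for k
  define h where "h k = gegenbauer_coeff mu (n + 1) k * z ^ Suc k" for k
  have g0: "g 0 = 0"
    unfolding g_def using gegenbauer_coeff_0_Suc_Suc[of n mu] by (simp add: c_def d_def)
  have gSuc: "g (Suc k) = 4 * c * h k" for k
  proof -
    have "2 * c * gegenbauer_coeff mu (n + 1) (Suc k) - d * gegenbauer_coeff mu n (Suc k)
        - (real n + 2) * gegenbauer_coeff mu (n + 2) (Suc k) = 4 * c * gegenbauer_coeff mu (n + 1) k"
      using gegenbauer_coeff_Suc_Suc[OF mu, of n k] by (simp add: c_def d_def)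
    then show ?thesis unfolding g_def h_def by simp
  qed
  have upto: "gegenbauer_hyp mu n z = (\<Sum>k\<le>Suc (Suc n). gegenbauer_coeff mu n k * z ^ k)"
    "gegenbauer_hyp mu (n + 1) z = (\<Sum>k\<le>Suc (Suc n). gegenbauer_coeff mu (n + 1) k * z ^ k)"
    "gegenbauer_hyp mu (n + 2) z = (\<Sum>k\<le>Suc (Suc n). gegenbauer_coeff mu (n + 2) k * z ^ k)"
    by (rule gegenbauer_hyp_eq_sum_atMost; simp)+
  have "2 * (1 - 2 * z) * c * gegenbauer_hyp mu (n + 1) z - d * gegenbauer_hyp mu n z
      - (real n + 2) * gegenbauer_hyp mu (n + 2) z
      = (\<Sum>k\<le>Suc (Suc n). g k) - 4 * c * (\<Sum>k\<le>Suc (Suc n). h k)"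
    unfolding upto sum_distrib_left sum_subtractf[symmetric]
    by (rule sum.cong) (simp_all add: g_def h_def algebra_simps)
  also have "(\<Sum>k\<le>Suc (Suc n). h k) = (\<Sum>k\<le>Suc n. h k)"
    by (simp add: h_def gegenbauer_coeff_eq_0)
  also have "(\<Sum>k\<le>Suc (Suc n). g k) = 4 * c * (\<Sum>k\<le>Suc n. h k)"
    unfolding sum.atMost_Suc_shift[of g] g0 gSuc by (simp add: sum_distrib_left del: sum.atMost_Suc)
  finally show ?thesis by (simp add: c_def d_def algebra_simps)
qed

lemma gegenbauer_eq_gegenbauer_hyp:
  fixes mu x :: real
  assumes mu: "mu > -1/2"
  shows "gegenbauer mu n x = gegenbauer_hyp mu n ((1 - x) / 2)"
proof -
  define z where "z = (1 - x) / 2"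
  have x: "x = 1 - 2 * z" unfolding z_def by (simp add: field_simps)
  have "gegenbauer mu n x = gegenbauer_hyp mu n z \<and> gegenbauer mu (n + 1) x = gegenbauer_hyp mu (n + 1) z"
  proof (induction n)
    case 0
    have "gegenbauer_hyp mu 0 z = 1" "gegenbauer_hyp mu 1 z = 2 * mu * x"
      using mu by (simp_all add: gegenbauer_hyp_def gegenbauer_coeff_def x pochhammer_rec' numeral_2_eq_2 field_simps)
    then show ?case using gegenbauer_1[of mu x] by (simp add: gegenbauer_0)
  next
    case (Suc n)
    have "(real n + 2) * gegenbauer mu (n + 2) x = (real n + 2) * gegenbauer_hyp mu (n + 2) z"
      unfolding gegenbauer_Suc_Suc gegenbauer_hyp_Suc_Suc[OF mu] using Suc.IH by (simp add: x)
    then show ?case using Suc.IH by simp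
  qed
  then show ?thesis unfolding z_def by simp
qed

lemma gegenbauer_minus:
  fixes mu x :: real
  shows "gegenbauer mu n (- x) = (-1) ^ n * gegenbauer mu n x"
proof -
  have "gegenbauer mu n (- x) = (-1) ^ n * gegenbauer mu n x \<and>
        gegenbauer mu (n + 1) (- x) = (-1) ^ (n + 1) * gegenbauer mu (n + 1) x"
  proof (induction n)
    case 0
    show ?case using gegenbauer_1[of mu] by (simp add: gegenbauer_0)
  next
    case (Suc n)
    have "(real n + 2) * gegenbauer mu (n + 2) (- x)
        = 2 * (- x) * (real n + 1 + mu) * gegenbauer mu (n + 1) (- x) - (real n + 2 * mu) * gegenbauer mu n (- x)"
      by (rule gegenbauer_Suc_Suc)
    also have "\<dots> = (-1) ^ (n + 2) *
        (2 * x * (real n + 1 + mu) * gegenbauer mu (n + 1) x - (real n + 2 * mu) * gegenbauer mu n x)"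
      using Suc.IH by (simp add: algebra_simps)
    also have "\<dots> = (real n + 2) * ((-1) ^ (n + 2) * gegenbauer mu (n + 2) x)"
      by (simp only: gegenbauer_Suc_Suc[symmetric] mult.left_commute)
    finally show ?case using Suc.IH by simp
  qed
  then show ?thesis ..
qed

lemma hyp2F1_coeff_binomial_sum:
  fixes b c :: real
  assumes c: "pochhammer c n \<noteq> 0" and j: "j \<le> n"
  shows "(\<Sum>k\<le>n. pochhammer (- real n) k * pochhammer b k / (pochhammer c k * fact k) * of_nat (k choose j))
       = pochhammer (- real n) j * pochhammer b j * pochhammer (c - b) (n - j) / (fact j * pochhammer c n)"
proof -
  define A where "A k = pochhammer (- real n) k * pochhammer b k / (pochhammer c k * fact k)" for k
  have cj: "pochhammer c j \<noteq> 0" using pochhammer_neq_0_mono[OF c j] .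
  have c_split: "pochhammer c n = pochhammer c j * pochhammer (c + real j) (n - j)"
    using pochhammer_product[OF j] .
  with c have cjn: "pochhammer (c + real j) (n - j) \<noteq> 0" by simp
  have shifted: "A (j + m) * of_nat ((j + m) choose j) = A j *
      (pochhammer (b + real j) m * pochhammer (- real (n - j)) m / (fact m * pochhammer (c + real j) m))"
    if m: "m \<le> n - j" for m
  proof -
    have "pochhammer (c + real j) m \<noteq> 0" using pochhammer_neq_0_mono[OF cjn m] .
    moreover have "- real n + real j = - real (n - j)" using j by simp
    then have "pochhammer (- real n) (j + m) = pochhammer (- real n) j * pochhammer (- real (n - j)) m"
      by (simp only: pochhammer_product')
    moreover have "(of_nat ((j + m) choose j) :: real) = fact (j + m) / (fact j * fact m)"
      by (subst binomial_fact) simp_all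
    ultimately show ?thesis
      using cj unfolding A_def pochhammer_product'[of b] pochhammer_product'[of c] by (simp add: field_simps)
  qed
  have "(\<Sum>k\<le>n. A k * of_nat (k choose j)) = (\<Sum>m\<le>n - j. A (j + m) * of_nat ((j + m) choose j))"
  proof -
    have "(\<Sum>k\<le>n. A k * of_nat (k choose j)) = (\<Sum>k\<in>{j..n}. A k * of_nat (k choose j))"
      by (intro sum.mono_neutral_right) auto
    also have "\<dots> = (\<Sum>m\<le>n - j. A (j + m) * of_nat ((j + m) choose j))"
      using j by (intro sum.reindex_bij_witness[of _ "\<lambda>m. j + m" "\<lambda>k. k - j"]) auto
    finally show ?thesis .
  qed
  also have "\<dots> = A j * (\<Sum>m\<le>n - j. pochhammer (b + real j) m * pochhammer (- real (n - j)) m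
      / (fact m * pochhammer (c + real j) m))"
    by (simp add: shifted sum_distrib_left)
  also have "(\<Sum>m\<le>n - j. pochhammer (b + real j) m * pochhammer (- real (n - j)) m
      / (fact m * pochhammer (c + real j) m)) = pochhammer (c - b) (n - j) / pochhammer (c + real j) (n - j)"
  proof -
    have "\<forall>i\<in>{0..<n - j}. c + real j \<noteq> - of_nat i"
      using cjn by (auto simp: pochhammer_eq_0_iff)
    from Vandermonde_pochhammer[OF this, of "b + real j"] show ?thesis
      by (simp add: atMost_atLeast0)
  qed
  finally show ?thesis
    unfolding A_def c_split using cj cjn by (simp add: field_simps)
qed

lemma hyp2F1_term_reflect:
  fixes b c z :: real
  assumes c: "pochhammer c n \<noteq> 0" and c': "pochhammer (b - c - real n + 1) n \<noteq> 0"
  shows "hyp2F1_term n b c (1 - z)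
       = pochhammer (c - b) n / pochhammer c n * hyp2F1_term n b (b - c - real n + 1) z"
proof -
  define A where "A k = pochhammer (- real n) k * pochhammer b k / (pochhammer c k * fact k)" for k
  have "hyp2F1_term n b c (1 - z) = (\<Sum>k\<le>n. \<Sum>j\<le>n. A k * of_nat (k choose j) * (- z) ^ j)"
  proof -
    have "(1 - z) ^ k = (\<Sum>j\<le>n. of_nat (k choose j) * (- z) ^ j)" if "k \<le> n" for k
    proof -
      have "(1 - z) ^ k = (\<Sum>j\<le>k. of_nat (k choose j) * (- z) ^ j)"
        using binomial_ring[of "- z" 1 k] by simp
      also have "\<dots> = (\<Sum>j\<le>n. of_nat (k choose j) * (- z) ^ j)"
        using that by (intro sum.mono_neutral_left) auto
      finally show ?thesis .
    qed
    then show ?thesis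
      unfolding hyp2F1_term_def A_def by (intro sum.cong refl) (simp add: sum_distrib_left mult.assoc)
  qed
  also have "\<dots> = (\<Sum>j\<le>n. (\<Sum>k\<le>n. A k * of_nat (k choose j)) * (- z) ^ j)"
    by (subst sum.swap) (simp add: sum_distrib_right)
  also have "\<dots> = (\<Sum>j\<le>n. pochhammer (c - b) n / pochhammer c n *
      (pochhammer (- real n) j * pochhammer b j / (pochhammer (b - c - real n + 1) j * fact j) * z ^ j))"
  proof (intro sum.cong refl)
    fix j assume "j \<in> {..n}"
    then have j: "j \<le> n" by simp
    have c'j: "pochhammer (b - c - real n + 1) j \<noteq> 0" using pochhammer_neq_0_mono[OF c' j] .
    have "pochhammer (c - b) n = pochhammer (c - b) (n - j) * pochhammer (c - b + real (n - j)) j"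
      using pochhammer_product'[of "c - b" "n - j" j] j by simp
    also have "pochhammer (c - b + real (n - j)) j = (-1) ^ j * pochhammer (b - c - real n + 1) j"
      using pochhammer_minus[of "b - c - real (n - j)" j] j by (simp add: algebra_simps)
    finally have cb: "pochhammer (c - b) (n - j)
        = (-1) ^ j * pochhammer (c - b) n / pochhammer (b - c - real n + 1) j"
      using c'j by (simp add: field_simps)
    define s where "s = (-1::real) ^ j"
    have s: "s * s = 1" unfolding s_def by (simp flip: power_mult_distrib)
    have "(- z) ^ j = s * z ^ j" unfolding s_def by (simp flip: power_mult_distrib)
    then show "(\<Sum>k\<le>n. A k * of_nat (k choose j)) * (- z) ^ j = pochhammer (c - b) n / pochhammer c n *
      (pochhammer (- real n) j * pochhammer b j / (pochhammer (b - c - real n + 1) j * fact j) * z ^ j)"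
      unfolding A_def hyp2F1_coeff_binomial_sum[OF c j] cb s_def[symmetric]
      using c c'j s by (simp add: field_simps)
  qed
  finally show ?thesis
    unfolding hyp2F1_term_def sum_distrib_left .
qed

lemma hyp2F1_term_reflect_gegenbauer:
  fixes lam z :: real
  assumes lam: "lam > -1/2"
  shows "(-1) ^ n * hyp2F1_term n (real n + 2 * lam + 1) (lam + 3/2) (1 - z)
       = (lam + 1/2) / (lam + real n + 1/2) * hyp2F1_term n (real n + 2 * lam + 1) (lam + 1/2) z"
proof -
  have "pochhammer (lam + 3/2) n > 0" "pochhammer (lam + 1/2) n > 0"
    using lam by (simp_all add: pochhammer_pos)
  moreover have e: "real n + 2 * lam + 1 - (lam + 3/2) - real n + 1 = lam + 1/2" by simp
  ultimately have reflect: "hyp2F1_term n (real n + 2 * lam + 1) (lam + 3/2) (1 - z)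
      = pochhammer (lam + 3/2 - (real n + 2 * lam + 1)) n / pochhammer (lam + 3/2) n
        * hyp2F1_term n (real n + 2 * lam + 1) (lam + 1/2) z"
    using hyp2F1_term_reflect[of "lam + 3/2" n "real n + 2 * lam + 1" z, unfolded e] by simp
  have sign: "pochhammer (lam + 3/2 - (real n + 2 * lam + 1)) n = (-1) ^ n * pochhammer (lam + 1/2) n"
    using pochhammer_minus[of "lam + real n - 1/2" n] by (simp add: algebra_simps)
  have ratio: "pochhammer (lam + 1/2) n / pochhammer (lam + 3/2) n = (lam + 1/2) / (lam + real n + 1/2)"
  proof -
    have "pochhammer (lam + 1/2) (Suc n) = (lam + 1/2) * pochhammer (lam + 3/2) n"
      unfolding pochhammer_rec by (simp add: add.assoc)
    then have "pochhammer (lam + 1/2) n * (lam + 1/2 + real n) = (lam + 1/2) * pochhammer (lam + 3/2) n"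
      by (simp add: pochhammer_rec' mult.commute)
    with lam \<open>pochhammer (lam + 3/2) n > 0\<close> show ?thesis
      by (simp add: field_simps)
  qed
  have "hyp2F1_term n (real n + 2 * lam + 1) (lam + 3/2) (1 - z) = (-1) ^ n *
      (pochhammer (lam + 1/2) n / pochhammer (lam + 3/2) n) * hyp2F1_term n (real n + 2 * lam + 1) (lam + 1/2) z"
    unfolding reflect sign by simp
  then show ?thesis
    unfolding ratio by (simp add: power_mult_distrib[symmetric] mult.assoc[symmetric])
qed

lemma has_integral_Beta_interval:
  fixes x p q :: real
  assumes x: "x < 1" and p: "p > 0" and q: "q > 0"
  shows "((\<lambda>t. (t - x) powr (p - 1) * (1 - t) powr (q - 1)) has_integral (1 - x) powr (p + q - 1) * Beta p q)
           {x..1}"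
proof -
  define h where "h = 1 - x"
  have h: "h > 0" using x by (simp add: h_def)
  have "((\<lambda>s. s powr (p - 1) * (1 - s) powr (q - 1)) has_integral Beta p q) (cbox 0 1)"
    using has_integral_Beta_real[OF p q] by simp
  from has_integral_affinity'[OF this, of "1 / h" "- x / h"] h
  have "((\<lambda>t. (1 / h * t + - x / h) powr (p - 1) * (1 - (1 / h * t + - x / h)) powr (q - 1))
      has_integral h * Beta p q) {(0 - - x / h) * h .. (1 - - x / h) * h}"
    by (simp add: mult.commute)
  moreover have "(0 - - x / h) * h = x" "(1 - - x / h) * h = 1" using h by (simp_all add: h_def field_simps)
  moreover have "1 / h * t + - x / h = (t - x) / h" "1 - (t - x) / h = (1 - t) / h" for t
    using h by (simp_all add: field_simps) (simp add: h_def)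
  ultimately have "((\<lambda>t. ((t - x) / h) powr (p - 1) * ((1 - t) / h) powr (q - 1)) has_integral h * Beta p q)
      {x..1}"
    by simp
  moreover have "h powr (p + q - 1) = h powr (p + q - 2) * h"
    using powr_add[of h "p + q - 2" 1] h by simp
  ultimately have "((\<lambda>t. h powr (p + q - 2) * (((t - x) / h) powr (p - 1) * ((1 - t) / h) powr (q - 1)))
      has_integral h powr (p + q - 1) * Beta p q) {x..1}"
    using has_integral_mult_right h by (simp add: mult.assoc)
  then show ?thesis
    unfolding h_def[symmetric]
  proof (rule has_integral_eq[rotated])
    fix t assume "t \<in> {x..1}"
    then have "t - x \<ge> 0" "1 - t \<ge> 0" by auto
    then show "h powr (p + q - 2) * (((t - x) / h) powr (p - 1) * ((1 - t) / h) powr (q - 1))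
        = (t - x) powr (p - 1) * (1 - t) powr (q - 1)"
      using h by (simp add: powr_divide field_simps powr_add[symmetric])
  qed
qed

lemma Beta_add_of_nat:
  fixes p q :: real
  assumes "p > 0" "q > 0"
  shows "Beta p (q + real k) = Beta p q * pochhammer q k / pochhammer (p + q) k"
proof -
  have "q \<notin> \<int>\<^sub>\<le>\<^sub>0" "p + q \<notin> \<int>\<^sub>\<le>\<^sub>0" using assms by (auto elim!: nonpos_Ints_cases)
  then have "pochhammer q k = Gamma (q + real k) / Gamma q"
            "pochhammer (p + q) k = Gamma (p + q + real k) / Gamma (p + q)"
    by (simp_all add: pochhammer_Gamma)
  moreover have "Gamma q > 0" "Gamma (p + q) > 0" "Gamma (p + q + real k) > 0"
    using assms by simp_all
  ultimately show ?thesis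
    unfolding Beta_def by (simp add: field_simps)
qed

lemma Beta_one_half: "q > 0 \<Longrightarrow> Beta (1/2) q = sqrt pi * Gamma q / Gamma (q + 1/2)"
  by (simp add: Beta_def Gamma_one_half_real add.commute)

lemma I_minus_poly:
  fixes lam x :: real and a :: "nat \<Rightarrow> real"
  assumes x: "x < 1" and lam: "lam > -1"
  shows "I_minus lam (\<lambda>t. \<Sum>k\<le>N. a k * (1 - t) ^ k) x
       = (\<Sum>k\<le>N. a k * (1 - x) ^ Suc k * Beta (1/2) (lam + real k + 1))"
proof -
  have "((\<lambda>t. \<Sum>k\<le>N. a k * ((t - x) powr (1/2 - 1) * (1 - t) powr (lam + real k + 1 - 1)))
      has_integral (\<Sum>k\<le>N. a k * ((1 - x) powr (1/2 + (lam + real k + 1) - 1) * Beta (1/2) (lam + real k + 1))))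
      {x..1}"
    using lam by (intro has_integral_sum has_integral_mult_right has_integral_Beta_interval[OF x]) auto
  moreover have "(\<Sum>k\<le>N. a k * ((t - x) powr (1/2 - 1) * (1 - t) powr (lam + real k + 1 - 1)))
      = (t - x) powr (-1/2) * (1 - t) powr lam * (\<Sum>k\<le>N. a k * (1 - t) ^ k)" if "t \<le> 1" for t
  proof -
    have "(1 - t) powr (lam + real k) = (1 - t) powr lam * (1 - t) ^ k" for k
      using that by (cases "t = 1") (simp_all add: powr_add powr_realpow)
    then show ?thesis by (simp add: sum_distrib_left algebra_simps)
  qed
  ultimately have "((\<lambda>t. (t - x) powr (-1/2) * (1 - t) powr lam * (\<Sum>k\<le>N. a k * (1 - t) ^ k))
      has_integral (\<Sum>k\<le>N. a k * ((1 - x) powr (lam + real k + 1/2) * Beta (1/2) (lam + real k + 1))))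
      {x..1}"
    by (subst (asm) has_integral_cong) (auto simp: add_ac)
  then have "I_minus lam (\<lambda>t. \<Sum>k\<le>N. a k * (1 - t) ^ k) x = (\<Sum>k\<le>N. a k *
      ((1 - x) powr (- lam + 1/2) * (1 - x) powr (lam + real k + 1/2)) * Beta (1/2) (lam + real k + 1))"
    unfolding I_minus_def by (simp add: integral_unique sum_distrib_left algebra_simps)
  moreover have "(1 - x) powr (- lam + 1/2) * (1 - x) powr (lam + real k + 1/2) = (1 - x) ^ Suc k" for k
  proof -
    have "(1 - x) powr (- lam + 1/2) * (1 - x) powr (lam + real k + 1/2) = (1 - x) powr real (Suc k)"
      by (simp add: powr_add[symmetric])
    also have "\<dots> = (1 - x) ^ Suc k" using x by (intro powr_realpow) simp
    finally show ?thesis .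
  qed
  ultimately show ?thesis by simp
qed

lemma I_minus_cmult: "I_minus lam (\<lambda>t. c * f t) x = c * I_minus lam f x"
  unfolding I_minus_def by (simp add: mult.left_commute)

lemma I_plus_eq_I_minus_reflect: "I_plus lam f x = I_minus lam (\<lambda>t. f (- t)) (- x)"
proof -
  have "integral {-1..x} (\<lambda>t. (x - t) powr (-1/2) * (1 + t) powr lam * f t)
      = integral {- x..1} (\<lambda>t. (t - - x) powr (-1/2) * (1 - t) powr lam * f (- t))"
    using Henstock_Kurzweil_Integration.integral_reflect_real[of x "-1"
        "\<lambda>t. (x - t) powr (-1/2) * (1 + t) powr lam * f t"]
    by (simp add: add.commute)
  then show ?thesis unfolding I_plus_def I_minus_def by simp
qed

lemma I_minus_gegenbauer:
  fixes lam x :: real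
  assumes lam: "lam > -1" and x: "x \<le> 1"
  shows "I_minus lam (gegenbauer (lam + 1/2) n) x =
           c_const n lam * (1 - x) * hyp2F1_term n (real n + 2 * lam + 1) (lam + 3/2) ((1 - x) / 2)"
proof (cases "x = 1")
  case True
  then show ?thesis by (simp add: I_minus_def)
next
  case False
  with x have x: "x < 1" by simp
  define a where "a k = pochhammer (2 * lam + 1) n / fact n * (pochhammer (- real n) k *
      pochhammer (real n + 2 * lam + 1) k / (pochhammer (lam + 1) k * fact k)) / 2 ^ k" for k
  have expand: "gegenbauer (lam + 1/2) n = (\<lambda>t. \<Sum>k\<le>n. a k * (1 - t) ^ k)"
    using lam by (intro ext) (simp add: gegenbauer_eq_gegenbauer_hyp gegenbauer_hyp_eq_hyp2F1 hyp2F1_term_def a_def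
        sum_distrib_left power_divide algebra_simps)
  have "I_minus lam (gegenbauer (lam + 1/2) n) x
      = (\<Sum>k\<le>n. a k * (1 - x) ^ Suc k * Beta (1/2) (lam + real k + 1))"
    unfolding expand by (rule I_minus_poly[OF x lam])
  also have "\<dots> = c_const n lam * (1 - x) * hyp2F1_term n (real n + 2 * lam + 1) (lam + 3/2) ((1 - x) / 2)"
    unfolding hyp2F1_term_def sum_distrib_left
  proof (intro sum.cong refl)
    fix k
    have "Beta (1/2) (lam + real k + 1)
        = sqrt pi * Gamma (lam + 1) / Gamma (lam + 3/2) * pochhammer (lam + 1) k / pochhammer (lam + 3/2) k"
      using Beta_add_of_nat[of "1/2" "lam + 1" k] Beta_one_half[of "lam + 1"] lam by (simp add: add_ac)
    moreover have "pochhammer (lam + 1) k > 0" "pochhammer (lam + 3/2) k > 0" "Gamma (lam + 3/2) > 0"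
      using lam by (simp_all add: pochhammer_pos)
    ultimately show "a k * (1 - x) ^ Suc k * Beta (1/2) (lam + real k + 1) = c_const n lam * (1 - x) *
        (pochhammer (- real n) k * pochhammer (real n + 2 * lam + 1) k /
         (pochhammer (lam + 3/2) k * fact k) * ((1 - x) / 2) ^ k)"
      by (simp add: a_def c_const_def field_simps)
  qed
  finally show ?thesis .
qed

lemma I_plus_gegenbauer:
  fixes lam x :: real
  assumes lam: "lam > -1/2" and x: "-1 \<le> x"
  shows "I_plus lam (gegenbauer (lam + 1/2) n) x =
           c_const n lam * ((lam + 1/2) / (lam + real n + 1/2)) * (1 + x) *
           hyp2F1_term n (real n + 2 * lam + 1) (lam + 1/2) ((1 - x) / 2)"
proof -
  have "I_plus lam (gegenbauer (lam + 1/2) n) x = (-1) ^ n * I_minus lam (gegenbauer (lam + 1/2) n) (- x)"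
    unfolding I_plus_eq_I_minus_reflect gegenbauer_minus I_minus_cmult ..
  also have "\<dots> = c_const n lam * (1 + x) *
      ((-1) ^ n * hyp2F1_term n (real n + 2 * lam + 1) (lam + 3/2) (1 - (1 - x) / 2))"
    using I_minus_gegenbauer[of lam "- x" n] lam x by (simp add: field_simps)
  finally show ?thesis
    unfolding hyp2F1_term_reflect_gegenbauer[OF lam] by (simp add: algebra_simps)
qed

theorem proposition3p1:
  fixes lam x :: real and n :: nat
  assumes "lam \<ge> 0" and "-1 \<le> x" and "x \<le> 1"
  shows "I_plus lam (gegenbauer (lam + 1/2) n) x =
           c_const n lam * ((lam + 1/2) / (lam + real n + 1/2)) * (1 + x) *
           hyp2F1_term n (real n + 2 * lam + 1) (lam + 1/2) ((1 - x) / 2) \<and>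
         I_minus lam (gegenbauer (lam + 1/2) n) x =
           c_const n lam * (1 - x) *
           hyp2F1_term n (real n + 2 * lam + 1) (lam + 3/2) ((1 - x) / 2)"
  using I_plus_gegenbauer[of lam x n] I_minus_gegenbauer[of lam x n] assms by simp

end
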